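(* Let $Y$ and $X$ be real-valued square integrable random variables on a common probability space. Then: (a) $\iota_X(Y)=\sqrt{\operatorname{Var}[E(Y\mid X)]}$; (b) $\iota_X(Y)=0$ if and only if $E(Y\mid X)=E(Y)$ (almost surely), i.e. $E(Y\mid X)$ does not depend on $X$; (c) $0\le \iota_X(Y)\le \iota_Y(Y)=\operatorname{SD}(Y)$, where $\operatorname{SD}(Y)=\sqrt{\operatorname{Var}(Y)}$; (d) $\iota_X(Y)=\iota_Y(Y)$ if and only if $Y$ depends on $X$ deterministically, i.e. $Y=g(X)$ (almost surely) for a measurable function $g:\mathbb{R}\to\mathbb{R}$; (e) if $Y=g(X)+U$ where $g:\mathbb{R}\to\mathbb{R}$ is measurable and $U$ and $X$ are stochastically independent, then $\iota_X(Y)=\iota_X[g(X)]=\operatorname{SD}[g(X)]$.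
   Context: For square integrable real random variables $Y$ and $Z$ on a common probability space, the mean impact of $Z$ on $Y$ is $$\iota_Z(Y)=\sup\{E[Y\delta(Z)] : \delta \text{ measurable},\ \delta(Z)\in L^2,\ E[\delta(Z)]=0,\ E[\delta^2(Z)]=1\}.$$ In particular $\iota_X(Y)$ uses $Z=X$ and $\iota_Y(Y)$ uses $Z=Y$. *)

theory Defs
  imports "HOL-Probability.Probability"
begin

text \<open>Mean impact of Z on Y: supremum of E[Y delta(Z)] over measurable delta with
  delta(Z) square integrable, E[delta(Z)] = 0 and E[delta(Z)^2] = 1.
  Convention: the supremum of the empty set (Z a.s. constant) is 0.\<close>
definition mean_impact :: "'a measure \<Rightarrow> ('a \<Rightarrow> real) \<Rightarrow> ('a \<Rightarrow> real) \<Rightarrow> real" where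
  "mean_impact M Z Y =
    (let S = {(\<integral>x. Y x * \<delta> (Z x) \<partial>M) | \<delta>.
               \<delta> \<in> borel_measurable borel \<and>
               integrable M (\<lambda>x. (\<delta> (Z x))\<^sup>2) \<and>
               (\<integral>x. \<delta> (Z x) \<partial>M) = 0 \<and>
               (\<integral>x. (\<delta> (Z x))\<^sup>2 \<partial>M) = 1}
     in if S = {} then 0 else Sup S)"

definition cond_exp_given :: "'a measure \<Rightarrow> ('a \<Rightarrow> real) \<Rightarrow> ('a \<Rightarrow> real) \<Rightarrow> 'a \<Rightarrow> real" where
  "cond_exp_given M X Y = real_cond_exp M (vimage_algebra (space M) X borel) Y"

end

theory Submission
  imports Defs
begin

text \<open>Write C = E(Y | X). Testing against functions of X cannot distinguish Y from C, so
  for a standardized \<delta>(X) the value E[Y \<delta>(X)] is the covariance of \<delta>(X) with C. By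
  Cauchy--Schwarz it is at most SD(C), with equality for \<delta>(X) = (C - E Y) / SD(C), which
  is a function of X by the Doob--Dynkin lemma; hence the mean impact is SD(C). Parts (b)--(d)
  then follow from the Pythagorean identity E[(Y - C)^2] = Var Y - Var C, and part (e) from
  E[U \<delta>(X)] = E U E \<delta>(X) = 0, where U inherits square integrability from Y by Fubini.\<close>

lemma integrable_mult_of_square_integrable:
  fixes f g :: "'a \<Rightarrow> real"
  assumes "f \<in> borel_measurable M" "g \<in> borel_measurable M"
    and "integrable M (\<lambda>x. (f x)\<^sup>2)" "integrable M (\<lambda>x. (g x)\<^sup>2)"
  shows "integrable M (\<lambda>x. f x * g x)"
proof (rule Bochner_Integration.integrable_bound)
  show "integrable M (\<lambda>x. (f x)\<^sup>2 + (g x)\<^sup>2)"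
    using assms by auto
  have "\<bar>a * b\<bar> \<le> a\<^sup>2 + b\<^sup>2" for a b :: real
    using sum_squares_bound[of "\<bar>a\<bar>" "\<bar>b\<bar>"] abs_ge_zero[of "a * b"]
    unfolding abs_mult power2_abs by linarith
  then show "AE x in M. norm (f x * g x) \<le> norm ((f x)\<^sup>2 + (g x)\<^sup>2)"
    by simp
qed (use assms in auto)

lemma square_integrable_diff:
  fixes f g :: "'a \<Rightarrow> real"
  assumes "f \<in> borel_measurable M" "g \<in> borel_measurable M"
    and "integrable M (\<lambda>x. (f x)\<^sup>2)" "integrable M (\<lambda>x. (g x)\<^sup>2)"
  shows "integrable M (\<lambda>x. (f x - g x)\<^sup>2)"
  using integrable_mult_of_square_integrable[OF assms] assms(3,4)
  by (simp add: power2_diff mult.assoc)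

lemma Cauchy_Schwarz_integral:
  fixes f g :: "'a \<Rightarrow> real"
  assumes [measurable]: "f \<in> borel_measurable M" "g \<in> borel_measurable M"
    and f2: "integrable M (\<lambda>x. (f x)\<^sup>2)" and g2: "integrable M (\<lambda>x. (g x)\<^sup>2)"
  shows "\<bar>\<integral>x. f x * g x \<partial>M\<bar> \<le> sqrt (\<integral>x. (f x)\<^sup>2 \<partial>M) * sqrt (\<integral>x. (g x)\<^sup>2 \<partial>M)"
proof -
  have fg: "integrable M (\<lambda>x. \<bar>f x\<bar> * \<bar>g x\<bar>)"
    by (rule integrable_mult_of_square_integrable) (use f2 g2 in simp_all)
  have "ennreal ((\<integral>x. \<bar>f x\<bar> * \<bar>g x\<bar> \<partial>M)\<^sup>2) = (\<integral>\<^sup>+x. ennreal \<bar>f x\<bar> * ennreal \<bar>g x\<bar> \<partial>M)\<^sup>2"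
    by (simp add: nn_integral_eq_integral[OF fg] ennreal_power ennreal_mult[symmetric])
  also have "\<dots> \<le> (\<integral>\<^sup>+x. ennreal \<bar>f x\<bar> ^ 2 \<partial>M) * (\<integral>\<^sup>+x. ennreal \<bar>g x\<bar> ^ 2 \<partial>M)"
    by (rule Cauchy_Schwarz_nn_integral) measurable
  also have "\<dots> = ennreal ((\<integral>x. (f x)\<^sup>2 \<partial>M) * (\<integral>x. (g x)\<^sup>2 \<partial>M))"
    by (simp add: ennreal_power nn_integral_eq_integral f2 g2 ennreal_mult)
  finally have "(\<integral>x. \<bar>f x\<bar> * \<bar>g x\<bar> \<partial>M)\<^sup>2 \<le> (\<integral>x. (f x)\<^sup>2 \<partial>M) * (\<integral>x. (g x)\<^sup>2 \<partial>M)"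
    by simp
  then have "(\<integral>x. \<bar>f x\<bar> * \<bar>g x\<bar> \<partial>M) \<le> sqrt (\<integral>x. (f x)\<^sup>2 \<partial>M) * sqrt (\<integral>x. (g x)\<^sup>2 \<partial>M)"
    by (metis real_le_rsqrt real_sqrt_mult)
  moreover have "\<bar>\<integral>x. f x * g x \<partial>M\<bar> \<le> (\<integral>x. \<bar>f x\<bar> * \<bar>g x\<bar> \<partial>M)"
    using integral_abs_bound[of M "\<lambda>x. f x * g x"] by (simp add: abs_mult)
  ultimately show ?thesis
    by linarith
qed

lemma measurable_comp_vimage_algebra:
  assumes "X \<in> S \<rightarrow> space N" "g \<in> borel_measurable N"
  shows "(\<lambda>x. g (X x)) \<in> borel_measurable (vimage_algebra S X N)"
  using measurable_compose[OF measurable_vimage_algebra1[OF assms(1)] assms(2)] .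

lemma measurable_vimage_algebra_factor_ennreal:
  fixes f :: "'a \<Rightarrow> ennreal"
  assumes X: "X \<in> S \<rightarrow> space N"
    and f: "f \<in> borel_measurable (vimage_algebra S X N)"
  shows "\<exists>h \<in> borel_measurable N. \<forall>x\<in>S. f x = h (X x)"
  using f
proof (induction rule: borel_measurable_induct)
  case (cong f g)
  then show ?case by fastforce
next
  case (set A)
  then obtain B where "B \<in> sets N" "A = X -` B \<inter> S"
    using sets_vimage_algebra2[OF X] by auto
  then show ?case
    using X by (intro bexI[of _ "indicator B"]) (auto simp: indicator_def)
next
  case (mult f c)
  then obtain h where "h \<in> borel_measurable N" "\<forall>x\<in>S. f x = h (X x)" by blast
  then show ?case by (intro bexI[of _ "\<lambda>t. c * h t"]) auto
next
  case (add f g)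
  then obtain h k where "h \<in> borel_measurable N" "\<forall>x\<in>S. f x = h (X x)"
    and "k \<in> borel_measurable N" "\<forall>x\<in>S. g x = k (X x)" by blast
  then show ?case by (intro bexI[of _ "\<lambda>t. k t + h t"]) auto
next
  case (seq F)
  then obtain H where H: "\<And>i. H i \<in> borel_measurable N" "\<And>i. \<forall>x\<in>S. F i x = H i (X x)"
    by metis
  then have "\<forall>x\<in>S. (SUP i. F i) x = (SUP i. H i (X x))"
    by (simp add: SUP_apply image_comp)
  then show ?case
    using H(1) by (intro bexI[of _ "\<lambda>t. SUP i. H i t"]) auto
qed

lemma measurable_vimage_algebra_factor:
  fixes f :: "'a \<Rightarrow> real"
  assumes X: "X \<in> S \<rightarrow> space N"
    and f: "f \<in> borel_measurable (vimage_algebra S X N)"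
  shows "\<exists>h \<in> borel_measurable N. \<forall>x\<in>S. f x = h (X x)"
proof -
  have "(\<lambda>x. ennreal (f x)) \<in> borel_measurable (vimage_algebra S X N)"
    using f by measurable
  then obtain h where h: "h \<in> borel_measurable N" "\<forall>x\<in>S. ennreal (f x) = h (X x)"
    using measurable_vimage_algebra_factor_ennreal[OF X] by blast
  have "(\<lambda>x. ennreal (- f x)) \<in> borel_measurable (vimage_algebra S X N)"
    using f by measurable
  then obtain k where k: "k \<in> borel_measurable N" "\<forall>x\<in>S. ennreal (- f x) = k (X x)"
    using measurable_vimage_algebra_factor_ennreal[OF X] by blast
  have "f x = enn2real (h (X x)) - enn2real (k (X x))" if "x \<in> S" for x
  proof -
    have "h (X x) = ennreal (f x)" "k (X x) = ennreal (- f x)"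
      using h(2) k(2) that by auto
    then show ?thesis
      by (cases "0 \<le> f x") (auto simp: ennreal_neg)
  qed
  then show ?thesis
    using h(1) k(1) by (intro bexI[of _ "\<lambda>t. enn2real (h t) - enn2real (k t)"]) auto
qed

definition standardized_transform :: "'a measure \<Rightarrow> ('a \<Rightarrow> real) \<Rightarrow> (real \<Rightarrow> real) \<Rightarrow> bool" where
  "standardized_transform M Z \<delta> \<longleftrightarrow>
     \<delta> \<in> borel_measurable borel \<and> integrable M (\<lambda>x. (\<delta> (Z x))\<^sup>2) \<and>
     (\<integral>x. \<delta> (Z x) \<partial>M) = 0 \<and> (\<integral>x. (\<delta> (Z x))\<^sup>2 \<partial>M) = 1"

lemma mean_impact_altdef:
  "mean_impact M Z Y =
    (let S = {\<integral>x. Y x * \<delta> (Z x) \<partial>M | \<delta>. standardized_transform M Z \<delta>}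
     in if S = {} then 0 else Sup S)"
  unfolding mean_impact_def standardized_transform_def ..

lemma mean_impact_eqI:
  assumes bound: "\<And>\<delta>. standardized_transform M Z \<delta> \<Longrightarrow> \<bar>\<integral>x. Y x * \<delta> (Z x) \<partial>M\<bar> \<le> s"
    and attained: "s = 0 \<or> (\<exists>\<delta>. standardized_transform M Z \<delta> \<and> (\<integral>x. Y x * \<delta> (Z x) \<partial>M) = s)"
  shows "mean_impact M Z Y = s"
proof -
  define S where "S = {\<integral>x. Y x * \<delta> (Z x) \<partial>M | \<delta>. standardized_transform M Z \<delta>}"
  have S_bound: "\<And>z. z \<in> S \<Longrightarrow> \<bar>z\<bar> \<le> s"
    unfolding S_def using bound by blast
  show ?thesis
  proof (cases "s = 0")
    case True
    with S_bound have "S = {} \<or> S = {0}"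
      by force
    then show ?thesis
      unfolding mean_impact_altdef S_def[symmetric] using True by auto
  next
    case False
    with attained have "s \<in> S"
      unfolding S_def by blast
    moreover have "Sup S = s"
      using \<open>s \<in> S\<close> S_bound by (intro cSup_eq_maximum) (auto simp: abs_le_iff)
    ultimately show ?thesis
      unfolding mean_impact_altdef S_def[symmetric] by auto
  qed
qed

lemma mean_impact_cong:
  assumes "\<And>\<delta>. standardized_transform M Z \<delta> \<Longrightarrow>
      (\<integral>x. Y x * \<delta> (Z x) \<partial>M) = (\<integral>x. G x * \<delta> (Z x) \<partial>M)"
  shows "mean_impact M Z Y = mean_impact M Z G"
proof -
  have "{\<integral>x. Y x * \<delta> (Z x) \<partial>M | \<delta>. standardized_transform M Z \<delta>} =
        {\<integral>x. G x * \<delta> (Z x) \<partial>M | \<delta>. standardized_transform M Z \<delta>}"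
    using assms by metis
  then show ?thesis
    unfolding mean_impact_altdef by simp
qed

context prob_space
begin

lemma variance_cong_AE:
  fixes f g :: "'a \<Rightarrow> real"
  assumes [measurable]: "f \<in> borel_measurable M" "g \<in> borel_measurable M"
    and "AE x in M. f x = g x"
  shows "variance f = variance g"
proof -
  have "expectation f = expectation g"
    using assms by (intro integral_cong_AE) auto
  then show ?thesis
    by (intro integral_cong_AE) (measurable, use assms in auto)
qed

lemma variance_eq_0_iff_AE:
  fixes f :: "'a \<Rightarrow> real"
  assumes [measurable]: "f \<in> borel_measurable M" and "integrable M (\<lambda>x. (f x)\<^sup>2)"
  shows "variance f = 0 \<longleftrightarrow> (AE x in M. f x = expectation f)"
proof -
  have "integrable M (\<lambda>x. (f x - expectation f)\<^sup>2)"
    using assms by (intro square_integrable_diff) auto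
  then have "variance f = 0 \<longleftrightarrow> (AE x in M. (f x - expectation f)\<^sup>2 = 0)"
    by (simp add: integral_nonneg_eq_0_iff_AE)
  then show ?thesis
    by simp
qed

lemma sigma_finite_subalgebra_vimage_algebra:
  assumes "X \<in> borel_measurable M"
  shows "sigma_finite_subalgebra M (vimage_algebra (space M) X (borel :: real measure))"
proof -
  have "subalgebra M (vimage_algebra (space M) X borel)"
    unfolding subalgebra_def using sets_image_in_sets[OF refl assms] by simp
  then show ?thesis
    by (intro finite_measure_subalgebra_is_sigma_finite)
       (simp add: finite_measure_axioms finite_measure_subalgebra_axioms.intro finite_measure_subalgebra_def)
qed

context
  fixes X :: "'a \<Rightarrow> real"
  assumes X[measurable]: "X \<in> borel_measurable M"
begin

interpretation sigma_finite_subalgebra M "vimage_algebra (space M) X borel"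
  by (rule sigma_finite_subalgebra_vimage_algebra[OF X])

lemma cond_exp_given_measurable [measurable]: "cond_exp_given M X Y \<in> borel_measurable M"
  unfolding cond_exp_given_def by simp

lemma cond_exp_given_factor:
  "\<exists>h \<in> borel_measurable borel. \<forall>x\<in>space M. cond_exp_given M X Y x = h (X x)"
  unfolding cond_exp_given_def
  by (rule measurable_vimage_algebra_factor) auto

lemma cond_exp_given_comp:
  assumes "g \<in> borel_measurable borel" and "integrable M (\<lambda>x. g (X x))"
  shows "AE x in M. cond_exp_given M X (\<lambda>x. g (X x)) x = g (X x)"
  unfolding cond_exp_given_def
  by (intro real_cond_exp_F_meas assms measurable_comp_vimage_algebra) auto

lemma cond_exp_given_cong_AE:
  assumes "Y \<in> borel_measurable M" "G \<in> borel_measurable M" and "AE x in M. Y x = G x"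
  shows "AE x in M. cond_exp_given M X Y x = cond_exp_given M X G x"
  unfolding cond_exp_given_def using assms by (intro real_cond_exp_cong) auto

lemma expectation_cond_exp_given:
  assumes "integrable M Y"
  shows "expectation (cond_exp_given M X Y) = expectation Y"
  unfolding cond_exp_given_def using assms by (rule real_cond_exp_int(2))

lemma square_integrable_cond_exp_given:
  assumes "integrable M Y" "integrable M (\<lambda>x. (Y x)\<^sup>2)"
  shows "integrable M (\<lambda>x. (cond_exp_given M X Y x)\<^sup>2)"
  unfolding cond_exp_given_def
  by (rule integrable_convex_cond_exp[OF assms(1), of UNIV, where q="\<lambda>x. x\<^sup>2"])
     (use assms(2) convex_power2 in auto)

lemma integral_mult_cond_exp_given:
  assumes W: "W \<in> borel_measurable (vimage_algebra (space M) X borel)"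
    and W2: "integrable M (\<lambda>x. (W x)\<^sup>2)"
    and Y: "Y \<in> borel_measurable M" and Y2: "integrable M (\<lambda>x. (Y x)\<^sup>2)"
  shows "(\<integral>x. W x * cond_exp_given M X Y x \<partial>M) = (\<integral>x. W x * Y x \<partial>M)"
proof -
  have "integrable M (\<lambda>x. W x * Y x)"
    using measurable_from_subalg[OF subalg W] by (intro integrable_mult_of_square_integrable Y W2 Y2)
  then show ?thesis
    unfolding cond_exp_given_def using W Y by (rule real_cond_exp_intg(2))
qed

context
  fixes Y :: "'a \<Rightarrow> real"
  assumes Y[measurable]: "Y \<in> borel_measurable M" and Y2: "integrable M (\<lambda>x. (Y x)\<^sup>2)"
begin

lemma integral_square_diff_cond_exp_given:
  "(\<integral>x. (Y x - cond_exp_given M X Y x)\<^sup>2 \<partial>M) = variance Y - variance (cond_exp_given M X Y)"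
proof -
  define C where "C = cond_exp_given M X Y"
  have YI: "integrable M Y"
    by (rule square_integrable_imp_integrable[OF Y Y2])
  have C[measurable]: "C \<in> borel_measurable (vimage_algebra (space M) X borel)"
    unfolding C_def cond_exp_given_def by simp
  have C2: "integrable M (\<lambda>x. (C x)\<^sup>2)"
    unfolding C_def by (rule square_integrable_cond_exp_given[OF YI Y2])
  have CI: "integrable M C" and CY: "integrable M (\<lambda>x. C x * Y x)"
    using measurable_from_subalg[OF subalg C]
    by (auto intro: square_integrable_imp_integrable[OF _ C2] integrable_mult_of_square_integrable[OF _ Y C2 Y2])
  text \<open>C is itself X-measurable, so it may serve as test function.\<close>
  have CC: "(\<integral>x. C x * C x \<partial>M) = (\<integral>x. C x * Y x \<partial>M)"
    using integral_mult_cond_exp_given[OF C C2 Y Y2] unfolding C_def .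
  have "(\<integral>x. (Y x - C x)\<^sup>2 \<partial>M) = (\<integral>x. (Y x)\<^sup>2 - 2 * (C x * Y x) + (C x)\<^sup>2 \<partial>M)"
    by (simp add: power2_diff algebra_simps)
  also have "\<dots> = (\<integral>x. (Y x)\<^sup>2 \<partial>M) - 2 * (\<integral>x. C x * Y x \<partial>M) + (\<integral>x. (C x)\<^sup>2 \<partial>M)"
    using C2 Y2 CY by simp
  also have "\<dots> = (\<integral>x. (Y x)\<^sup>2 \<partial>M) - (\<integral>x. (C x)\<^sup>2 \<partial>M)"
    using CC by (simp add: power2_eq_square)
  also have "\<dots> = variance Y - variance C"
    using variance_eq[OF YI Y2] variance_eq[OF CI C2] expectation_cond_exp_given[OF YI]
    unfolding C_def by simp
  finally show ?thesis
    unfolding C_def .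
qed

lemma variance_cond_exp_given_le: "variance (cond_exp_given M X Y) \<le> variance Y"
  using integral_square_diff_cond_exp_given integral_nonneg_AE[of "\<lambda>x. (Y x - cond_exp_given M X Y x)\<^sup>2" M]
  by simp

lemma variance_cond_exp_given_eq_iff:
  "variance (cond_exp_given M X Y) = variance Y \<longleftrightarrow>
    (\<exists>g \<in> borel_measurable (borel :: real measure). AE x in M. Y x = g (X x))"
proof -
  have "integrable M (\<lambda>x. (Y x - cond_exp_given M X Y x)\<^sup>2)"
    using square_integrable_cond_exp_given[OF square_integrable_imp_integrable[OF Y Y2] Y2]
    by (intro square_integrable_diff Y2) auto
  then have "(\<integral>x. (Y x - cond_exp_given M X Y x)\<^sup>2 \<partial>M) = 0 \<longleftrightarrow>
      (AE x in M. (Y x - cond_exp_given M X Y x)\<^sup>2 = 0)"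
    by (intro integral_nonneg_eq_0_iff_AE) auto
  then have "variance (cond_exp_given M X Y) = variance Y \<longleftrightarrow> (AE x in M. Y x = cond_exp_given M X Y x)"
    using integral_square_diff_cond_exp_given by auto
  also have "\<dots> \<longleftrightarrow> (\<exists>g \<in> borel_measurable (borel :: real measure). AE x in M. Y x = g (X x))"
  proof
    assume "AE x in M. Y x = cond_exp_given M X Y x"
    moreover obtain h where "h \<in> borel_measurable borel" "\<forall>x\<in>space M. cond_exp_given M X Y x = h (X x)"
      using cond_exp_given_factor by blast
    ultimately show "\<exists>g \<in> borel_measurable borel. AE x in M. Y x = g (X x)"
      by (auto elim: AE_mp)
  next
    assume "\<exists>g \<in> borel_measurable (borel :: real measure). AE x in M. Y x = g (X x)"
    then obtain g where g[measurable]: "g \<in> borel_measurable (borel :: real measure)"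
      and Yg: "AE x in M. Y x = g (X x)" by blast
    have "integrable M (\<lambda>x. g (X x))"
      using square_integrable_imp_integrable[OF Y Y2] Yg by (subst integrable_cong_AE) auto
    then have "AE x in M. cond_exp_given M X (\<lambda>x. g (X x)) x = g (X x)"
      by (rule cond_exp_given_comp[OF g])
    moreover have "AE x in M. cond_exp_given M X Y x = cond_exp_given M X (\<lambda>x. g (X x)) x"
      using Yg by (intro cond_exp_given_cong_AE) auto
    ultimately show "AE x in M. Y x = cond_exp_given M X Y x"
      using Yg by eventually_elim simp
  qed
  finally show ?thesis .
qed

lemma square_integrable_centred_cond_exp_given:
  "integrable M (\<lambda>x. (cond_exp_given M X Y x - expectation Y)\<^sup>2)"
  using square_integrable_cond_exp_given[OF square_integrable_imp_integrable[OF Y Y2] Y2]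
  by (intro square_integrable_diff) auto

lemma integral_standardized_transform_cond_exp_given:
  assumes "standardized_transform M X \<delta>"
  shows "(\<integral>x. Y x * \<delta> (X x) \<partial>M) = (\<integral>x. \<delta> (X x) * (cond_exp_given M X Y x - expectation Y) \<partial>M)"
proof -
  define C where "C = cond_exp_given M X Y"
  from assms have \<delta>[measurable]: "\<delta> \<in> borel_measurable borel"
    and \<delta>2: "integrable M (\<lambda>x. (\<delta> (X x))\<^sup>2)" and \<delta>0: "(\<integral>x. \<delta> (X x) \<partial>M) = 0"
    unfolding standardized_transform_def by auto
  have "integrable M (\<lambda>x. \<delta> (X x) * C x)"
    using square_integrable_cond_exp_given[OF square_integrable_imp_integrable[OF Y Y2] Y2] \<delta>2
    unfolding C_def by (intro integrable_mult_of_square_integrable) auto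
  moreover have "integrable M (\<lambda>x. \<delta> (X x))"
    by (rule square_integrable_imp_integrable[OF _ \<delta>2]) measurable
  moreover have "(\<integral>x. Y x * \<delta> (X x) \<partial>M) = (\<integral>x. \<delta> (X x) * C x \<partial>M)"
    unfolding C_def using \<delta>2 Y2
    by (subst integral_mult_cond_exp_given) (auto simp: mult.commute intro: measurable_comp_vimage_algebra)
  ultimately show ?thesis
    using \<delta>0 unfolding C_def by (simp add: right_diff_distrib)
qed

lemma standardized_transform_attaining_sqrt_variance:
  assumes nonzero: "variance (cond_exp_given M X Y) \<noteq> 0"
  obtains \<delta> where "standardized_transform M X \<delta>"
    and "(\<integral>x. Y x * \<delta> (X x) \<partial>M) = sqrt (variance (cond_exp_given M X Y))"
proof -
  define D where "D x = cond_exp_given M X Y x - expectation Y" for x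
  define s where "s = sqrt (variance (cond_exp_given M X Y))"
  obtain h where [measurable]: "h \<in> borel_measurable borel"
    and h: "\<forall>x\<in>space M. cond_exp_given M X Y x = h (X x)"
    using cond_exp_given_factor by blast
  define \<delta> where "\<delta> t = (h t - expectation Y) / s" for t
  have \<delta>X: "\<And>x. x \<in> space M \<Longrightarrow> \<delta> (X x) = D x / s"
    unfolding \<delta>_def D_def using h by simp
  have s: "s \<noteq> 0" "(\<integral>x. (D x)\<^sup>2 \<partial>M) = s\<^sup>2"
    using nonzero variance_positive unfolding s_def D_def
    by (simp_all add: expectation_cond_exp_given[OF square_integrable_imp_integrable[OF Y Y2]])
  have "(\<integral>x. D x \<partial>M) = 0"
    using square_integrable_imp_integrable[OF _ square_integrable_cond_exp_given]
      expectation_cond_exp_given square_integrable_imp_integrable[OF Y Y2] Y2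
    unfolding D_def by (simp add: prob_space)
  then have "(\<integral>x. \<delta> (X x) \<partial>M) = 0"
    by (simp add: \<delta>X cong: Bochner_Integration.integral_cong)
  moreover have "(\<integral>x. (\<delta> (X x))\<^sup>2 \<partial>M) = 1"
    using s by (simp add: \<delta>X power_divide cong: Bochner_Integration.integral_cong)
  moreover have "integrable M (\<lambda>x. (\<delta> (X x))\<^sup>2)"
    using square_integrable_centred_cond_exp_given
      Bochner_Integration.integrable_cong[OF refl, of M "\<lambda>x. (D x)\<^sup>2 / s\<^sup>2" "\<lambda>x. (\<delta> (X x))\<^sup>2"]
    unfolding D_def[symmetric] by (simp add: \<delta>X power_divide)
  moreover have "\<delta> \<in> borel_measurable borel"
    unfolding \<delta>_def by measurable
  ultimately have std: "standardized_transform M X \<delta>"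
    unfolding standardized_transform_def by blast
  have "(\<integral>x. Y x * \<delta> (X x) \<partial>M) = (\<integral>x. (D x)\<^sup>2 / s \<partial>M)"
    unfolding integral_standardized_transform_cond_exp_given[OF std] D_def[symmetric]
    by (simp add: \<delta>X power2_eq_square cong: Bochner_Integration.integral_cong)
  also have "\<dots> = s"
    using s by (simp add: power2_eq_square)
  finally show ?thesis
    using std that unfolding s_def by blast
qed

lemma mean_impact_eq_sqrt_variance_cond_exp:
  "mean_impact M X Y = sqrt (variance (cond_exp_given M X Y))"
proof (rule mean_impact_eqI)
  fix \<delta> assume \<delta>: "standardized_transform M X \<delta>"
  then have "\<bar>\<integral>x. \<delta> (X x) * (cond_exp_given M X Y x - expectation Y) \<partial>M\<bar>
      \<le> sqrt (\<integral>x. (\<delta> (X x))\<^sup>2 \<partial>M) * sqrt (\<integral>x. (cond_exp_given M X Y x - expectation Y)\<^sup>2 \<partial>M)"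
    using square_integrable_centred_cond_exp_given
    by (intro Cauchy_Schwarz_integral) (auto simp: standardized_transform_def)
  then show "\<bar>\<integral>x. Y x * \<delta> (X x) \<partial>M\<bar> \<le> sqrt (variance (cond_exp_given M X Y))"
    using \<delta> expectation_cond_exp_given[OF square_integrable_imp_integrable[OF Y Y2]]
    by (simp add: integral_standardized_transform_cond_exp_given standardized_transform_def)
next
  show "sqrt (variance (cond_exp_given M X Y)) = 0 \<or> (\<exists>\<delta>. standardized_transform M X \<delta> \<and>
      (\<integral>x. Y x * \<delta> (X x) \<partial>M) = sqrt (variance (cond_exp_given M X Y)))"
  proof (cases "variance (cond_exp_given M X Y) = 0")
    case False
    then obtain \<delta> where "standardized_transform M X \<delta>"
      "(\<integral>x. Y x * \<delta> (X x) \<partial>M) = sqrt (variance (cond_exp_given M X Y))"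
      by (rule standardized_transform_attaining_sqrt_variance)
    then show ?thesis
      by blast
  qed simp
qed

end

lemma mean_impact_comp_eq_sqrt_variance:
  assumes g[measurable]: "g \<in> borel_measurable borel" and g2: "integrable M (\<lambda>x. (g (X x))\<^sup>2)"
  shows "mean_impact M X (\<lambda>x. g (X x)) = sqrt (variance (\<lambda>x. g (X x)))"
proof -
  have "integrable M (\<lambda>x. g (X x))"
    by (rule square_integrable_imp_integrable[OF _ g2]) measurable
  then have "AE x in M. cond_exp_given M X (\<lambda>x. g (X x)) x = g (X x)"
    by (rule cond_exp_given_comp[OF g])
  then have "variance (cond_exp_given M X (\<lambda>x. g (X x))) = variance (\<lambda>x. g (X x))"
    by (rule variance_cong_AE[rotated 2]) measurable
  moreover have "mean_impact M X (\<lambda>x. g (X x)) = sqrt (variance (cond_exp_given M X (\<lambda>x. g (X x))))"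
    by (rule mean_impact_eq_sqrt_variance_cond_exp[OF _ g2]) measurable
  ultimately show ?thesis
    by simp
qed

end

lemma nn_integral_indep_var:
  assumes ind: "indep_var S X T U" and f: "f \<in> borel_measurable (S \<Otimes>\<^sub>M T)"
  shows "(\<integral>\<^sup>+ x. f (X x, U x) \<partial>M) = (\<integral>\<^sup>+ s. \<integral>\<^sup>+ t. f (s, t) \<partial>distr M T U \<partial>distr M S X)"
proof -
  have X: "X \<in> measurable M S" and U: "U \<in> measurable M T"
    and joint: "distr M S X \<Otimes>\<^sub>M distr M T U = distr M (S \<Otimes>\<^sub>M T) (\<lambda>x. (X x, U x))"
    using ind unfolding indep_var_distribution_eq by auto
  interpret PU: prob_space "distr M T U"
    by (rule prob_space_distr[OF U])
  have "sets (distr M S X \<Otimes>\<^sub>M distr M T U) = sets (S \<Otimes>\<^sub>M T)"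
    by (rule sets_pair_measure_cong) simp_all
  from measurable_cong_sets[OF this refl] f
  have "f \<in> borel_measurable (distr M S X \<Otimes>\<^sub>M distr M T U)"
    by simp
  then have "(\<integral>\<^sup>+ s. \<integral>\<^sup>+ t. f (s, t) \<partial>distr M T U \<partial>distr M S X) = integral\<^sup>N (distr M (S \<Otimes>\<^sub>M T) (\<lambda>x. (X x, U x))) f"
    unfolding joint[symmetric] by (rule PU.nn_integral_fst)
  also have "\<dots> = (\<integral>\<^sup>+ x. f (X x, U x) \<partial>M)"
    using X U f by (intro nn_integral_distr) auto
  finally show ?thesis ..
qed

text \<open>E[(g(x) + U)^2] is finite for almost every value x of X; any one such x shows that U
  is square integrable.\<close>
lemma square_integrable_indep_summand:
  fixes X U :: "'a \<Rightarrow> real" and g :: "real \<Rightarrow> real"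
  assumes [measurable]: "X \<in> borel_measurable M" "U \<in> borel_measurable M" "g \<in> borel_measurable borel"
    and ind: "indep_var borel X borel U"
    and sum2: "integrable M (\<lambda>x. (g (X x) + U x)\<^sup>2)"
  shows "integrable M (\<lambda>x. (U x)\<^sup>2)"
proof -
  interpret PX: prob_space "distr M borel X"
    by (rule prob_space_distr) simp
  interpret PU: prob_space "distr M borel U"
    by (rule prob_space_distr) simp
  define f where "f p = ennreal ((g (fst p) + snd p)\<^sup>2)" for p :: "real \<times> real"
  have f[measurable]: "f \<in> borel_measurable (borel \<Otimes>\<^sub>M borel)"
    unfolding f_def by measurable
  have "(\<integral>\<^sup>+ s. \<integral>\<^sup>+ t. f (s, t) \<partial>distr M borel U \<partial>distr M borel X) = (\<integral>\<^sup>+ x. f (X x, U x) \<partial>M)"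
    by (rule nn_integral_indep_var[OF ind f, symmetric])
  also have "\<dots> = (\<integral>\<^sup>+ x. ennreal ((g (X x) + U x)\<^sup>2) \<partial>M)"
    by (simp add: f_def)
  also have "\<dots> \<noteq> \<infinity>"
    using integrableD(2)[OF sum2] by simp
  finally have "AE s in distr M borel X. (\<integral>\<^sup>+ t. f (s, t) \<partial>distr M borel U) \<noteq> \<infinity>"
    by (intro nn_integral_PInf_AE) measurable
  then have "ae_filter (distr M borel X) = bot \<or> (\<exists>c. (\<integral>\<^sup>+ t. f (c, t) \<partial>distr M borel U) \<noteq> \<infinity>)"
    by (rule eventually_happens)
  moreover have "ae_filter (distr M borel X) \<noteq> bot"
    unfolding trivial_limit_def by simp
  ultimately obtain c where "(\<integral>\<^sup>+ t. f (c, t) \<partial>distr M borel U) \<noteq> \<infinity>"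
    by blast
  moreover have "(\<integral>\<^sup>+ t. f (c, t) \<partial>distr M borel U) = (\<integral>\<^sup>+ x. ennreal ((g c + U x)\<^sup>2) \<partial>M)"
    by (subst nn_integral_distr) (simp_all add: f_def)
  ultimately have "integrable M (\<lambda>x. (g c + U x)\<^sup>2)"
    by (intro integrableI_nonneg) (auto simp: top.not_eq_extremum)
  then have "integrable M (\<lambda>x. (g c + U x - g c)\<^sup>2)"
    by (intro square_integrable_diff) auto
  then show ?thesis
    by simp
qed

lemma mean_impact_indep_noise:
  fixes X U Y :: "'a \<Rightarrow> real" and g :: "real \<Rightarrow> real"
  assumes [measurable]: "X \<in> borel_measurable M" "U \<in> borel_measurable M" "g \<in> borel_measurable borel"
    and ind: "indep_var borel X borel U"
    and Y: "\<forall>x\<in>space M. Y x = g (X x) + U x" and Y2: "integrable M (\<lambda>x. (Y x)\<^sup>2)"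
  shows "mean_impact M X Y = mean_impact M X (\<lambda>x. g (X x))"
    and "mean_impact M X (\<lambda>x. g (X x)) = sqrt (variance (\<lambda>x. g (X x)))"
proof -
  have sum2: "integrable M (\<lambda>x. (g (X x) + U x)\<^sup>2)"
    using Y2 Bochner_Integration.integrable_cong[OF refl, of M "\<lambda>x. (Y x)\<^sup>2"] Y by simp
  have U2: "integrable M (\<lambda>x. (U x)\<^sup>2)"
    by (rule square_integrable_indep_summand[OF _ _ _ ind sum2]) measurable
  have "integrable M (\<lambda>x. (g (X x) + U x - U x)\<^sup>2)"
    using sum2 U2 by (intro square_integrable_diff) measurable
  then have g2: "integrable M (\<lambda>x. (g (X x))\<^sup>2)"
    by simp
  show "mean_impact M X Y = mean_impact M X (\<lambda>x. g (X x))"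
  proof (rule mean_impact_cong)
    fix \<delta> assume "standardized_transform M X \<delta>"
    then have \<delta>[measurable]: "\<delta> \<in> borel_measurable borel"
      and d2: "integrable M (\<lambda>x. (\<delta> (X x))\<^sup>2)" and d0: "(\<integral>x. \<delta> (X x) \<partial>M) = 0"
      unfolding standardized_transform_def by auto
    have "indep_var borel (\<lambda>x. \<delta> (X x)) borel U"
      using indep_var_compose[OF ind \<delta> measurable_ident] by (simp add: comp_def)
    moreover have "integrable M (\<lambda>x. \<delta> (X x))" "integrable M U"
      by (rule square_integrable_imp_integrable[OF _ d2], measurable,
          rule square_integrable_imp_integrable[OF _ U2], measurable)
    ultimately have "(\<integral>x. \<delta> (X x) * U x \<partial>M) = (\<integral>x. \<delta> (X x) \<partial>M) * (\<integral>x. U x \<partial>M)"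
      by (rule indep_var_lebesgue_integral)
    moreover have "integrable M (\<lambda>x. \<delta> (X x) * g (X x))" "integrable M (\<lambda>x. \<delta> (X x) * U x)"
      by (rule integrable_mult_of_square_integrable[OF _ _ d2 g2], measurable,
          rule integrable_mult_of_square_integrable[OF _ _ d2 U2], measurable)
    moreover have "(\<integral>x. Y x * \<delta> (X x) \<partial>M) = (\<integral>x. \<delta> (X x) * g (X x) + \<delta> (X x) * U x \<partial>M)"
      using Y by (intro Bochner_Integration.integral_cong) (auto simp: algebra_simps)
    ultimately show "(\<integral>x. Y x * \<delta> (X x) \<partial>M) = (\<integral>x. g (X x) * \<delta> (X x) \<partial>M)"
      using d0 by (simp add: mult.commute)
  qed
  show "mean_impact M X (\<lambda>x. g (X x)) = sqrt (variance (\<lambda>x. g (X x)))"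
    by (rule mean_impact_comp_eq_sqrt_variance[of X g, OF _ _ g2]) measurable
qed

end

theorem theorem1:
  fixes M :: "'a measure" and X Y :: "'a \<Rightarrow> real"
  assumes "prob_space M"
    and "X \<in> borel_measurable M" and "Y \<in> borel_measurable M"
    and "integrable M (\<lambda>x. (X x)\<^sup>2)" and "integrable M (\<lambda>x. (Y x)\<^sup>2)"
  shows "(mean_impact M X Y = sqrt (prob_space.variance M (cond_exp_given M X Y)))
    \<and> (mean_impact M X Y = 0 \<longleftrightarrow>
           (AE x in M. cond_exp_given M X Y x = prob_space.expectation M Y))
    \<and> (0 \<le> mean_impact M X Y \<and> mean_impact M X Y \<le> mean_impact M Y Y
           \<and> mean_impact M Y Y = sqrt (prob_space.variance M Y))
    \<and> (mean_impact M X Y = mean_impact M Y Y \<longleftrightarrow>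
           (\<exists>g \<in> borel_measurable (borel :: real measure). AE x in M. Y x = g (X x)))
    \<and> (\<forall>g U. g \<in> borel_measurable (borel :: real measure) \<longrightarrow> U \<in> borel_measurable M \<longrightarrow>
           prob_space.indep_var M borel X borel U \<longrightarrow>
           (\<forall>x \<in> space M. Y x = g (X x) + U x) \<longrightarrow>
           (mean_impact M X Y = mean_impact M X (\<lambda>x. g (X x)) \<and>
            mean_impact M X (\<lambda>x. g (X x)) = sqrt (prob_space.variance M (\<lambda>x. g (X x)))))"
proof -
  interpret prob_space M by fact
  note X = assms(2) and Y = assms(3) and Y2 = assms(5)
  define C where "C = cond_exp_given M X Y"
  have YI: "integrable M Y"
    by (rule square_integrable_imp_integrable[OF Y Y2])
  have impact: "mean_impact M X Y = sqrt (variance C)"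
    unfolding C_def by (rule mean_impact_eq_sqrt_variance_cond_exp[OF X Y Y2])
  have self_impact: "mean_impact M Y Y = sqrt (variance Y)"
    using mean_impact_comp_eq_sqrt_variance[OF Y, of "\<lambda>t. t"] Y2 by simp
  have "variance C = 0 \<longleftrightarrow> (AE x in M. C x = expectation Y)"
    using variance_eq_0_iff_AE[OF cond_exp_given_measurable[OF X]
        square_integrable_cond_exp_given[OF X YI Y2]]
    unfolding C_def expectation_cond_exp_given[OF X YI] .
  moreover have "variance C \<le> variance Y"
    unfolding C_def by (rule variance_cond_exp_given_le[OF X Y Y2])
  moreover have "variance C = variance Y \<longleftrightarrow>
      (\<exists>g \<in> borel_measurable (borel :: real measure). AE x in M. Y x = g (X x))"
    unfolding C_def by (rule variance_cond_exp_given_eq_iff[OF X Y Y2])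
  moreover have "0 \<le> variance C" "0 \<le> variance Y"
    by (rule variance_positive)+
  ultimately have "(mean_impact M X Y = 0 \<longleftrightarrow> (AE x in M. C x = expectation Y))
    \<and> (0 \<le> mean_impact M X Y \<and> mean_impact M X Y \<le> mean_impact M Y Y)
    \<and> (mean_impact M X Y = mean_impact M Y Y \<longleftrightarrow>
         (\<exists>g \<in> borel_measurable (borel :: real measure). AE x in M. Y x = g (X x)))"
    unfolding impact self_impact by simp
  then show ?thesis
    unfolding C_def[symmetric] using impact self_impact mean_impact_indep_noise[OF X _ _ _ _ Y2]
    by blast
qed

end
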